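(* Let $X$ be a $T_1$ space with countable extent and $|X|<\mathfrak{b}$. Then $X$ is selectively strongly star-Menger if and only if $X$ is strongly selectively $(a)$.
   Context: All spaces are regular. $St(A,\mathcal{U})=\bigcup\{U\in\mathcal{U}:U\cap A\neq\emptyset\}$. $\mathfrak{b}$ is the bounding number. $X$ has countable extent if every closed discrete subset is countable. $X$ is selectively strongly star-Menger if for every sequence $(\mathcal{U}_n:n\in\omega)$ of open covers and every sequence $(D_n:n\in\omega)$ of dense subsets there are finite $F_n\subseteq D_n$ with $\{St(F_n,\mathcal{U}_n):n\in\omega\}$ covering $X$. $X$ is strongly selectively $(a)$ if for every such $(\mathcal{U}_n)$ and $(D_n)$ there are $C_n\subseteq D_n$, closed and discrete in $X$, with $\{St(C_n,\mathcal{U}_n):n\in\omega\}$ covering $X$. *)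

theory Defs
  imports "HOL-Analysis.Analysis"
begin

definition St :: "'a set \<Rightarrow> 'a set set \<Rightarrow> 'a set" where
  "St A \<U> = \<Union>{U \<in> \<U>. U \<inter> A \<noteq> {}}"

definition open_cover :: "'a topology \<Rightarrow> 'a set set \<Rightarrow> bool" where
  "open_cover X \<U> \<longleftrightarrow> (\<forall>U\<in>\<U>. openin X U) \<and> \<Union>\<U> = topspace X"

definition dense_in :: "'a topology \<Rightarrow> 'a set \<Rightarrow> bool" where
  "dense_in X D \<longleftrightarrow> D \<subseteq> topspace X \<and> X closure_of D = topspace X"

definition closed_discrete :: "'a topology \<Rightarrow> 'a set \<Rightarrow> bool" where
  "closed_discrete X C \<longleftrightarrow> closedin X C \<and>
     (\<forall>x\<in>C. \<exists>U. openin X U \<and> U \<inter> C = {x})"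

definition countable_extent :: "'a topology \<Rightarrow> bool" where
  "countable_extent X \<longleftrightarrow> (\<forall>C. closed_discrete X C \<longrightarrow> countable C)"

definition unbounded_family :: "(nat \<Rightarrow> nat) set \<Rightarrow> bool" where
  "unbounded_family F \<longleftrightarrow>
     \<not> (\<exists>g::nat \<Rightarrow> nat. \<forall>f\<in>F. \<forall>\<^sub>F n in sequentially. f n \<le> g n)"

text \<open>|S| < \<b>: since \<b> is the least cardinality of an unbounded family,
  this says |S| is strictly smaller than every unbounded family.\<close>
definition card_less_b :: "'a set \<Rightarrow> bool" where
  "card_less_b S \<longleftrightarrow>
     (\<forall>F. unbounded_family F \<longrightarrow> (card_of S, card_of F) \<in> ordLess)"

definition selectively_strongly_star_Menger :: "'a topology \<Rightarrow> bool" where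
  "selectively_strongly_star_Menger X \<longleftrightarrow>
     (\<forall>(\<U>::nat \<Rightarrow> 'a set set) (D::nat \<Rightarrow> 'a set). (\<forall>n. open_cover X (\<U> n)) \<and> (\<forall>n. dense_in X (D n)) \<longrightarrow>
        (\<exists>F. (\<forall>n. finite (F n) \<and> F n \<subseteq> D n) \<and>
             (\<Union>n. St (F n) (\<U> n)) = topspace X))"

definition strongly_selectively_a :: "'a topology \<Rightarrow> bool" where
  "strongly_selectively_a X \<longleftrightarrow>
     (\<forall>(\<U>::nat \<Rightarrow> 'a set set) (D::nat \<Rightarrow> 'a set). (\<forall>n. open_cover X (\<U> n)) \<and> (\<forall>n. dense_in X (D n)) \<longrightarrow>
        (\<exists>C. (\<forall>n. C n \<subseteq> D n \<and> closed_discrete X (C n)) \<and>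
             (\<Union>n. St (C n) (\<U> n)) = topspace X))"

end

theory Submission
  imports Defs "HOL-Library.Nat_Bijection"
begin

text \<open>A finite subset of a T1 space is closed and discrete, which gives one implication.
  For the converse, run a strongly selectively (a) selection along each row of the sequence
  reindexed by a pairing of \<open>\<nat> \<times> \<nat>\<close>: this yields closed discrete \<open>C n \<subseteq> D n\<close>, countable by
  countable extent, such that every point lies in \<open>St (C n) (\<U> n)\<close> for infinitely many \<open>n\<close>.
  Enumerate each \<open>C n\<close>; a point \<open>x\<close> determines the function sending \<open>n\<close> to the least index of
  an element of \<open>C n\<close> whose star contains \<open>x\<close>. Since |X| < b, these functions are eventually
  dominated by a single \<open>g\<close>, so the first \<open>g n + 1\<close> elements of each \<open>C n\<close> already suffice.\<close>

lemma St_mono: "A \<subseteq> B \<Longrightarrow> St A \<U> \<subseteq> St B \<U>"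
  unfolding St_def by blast

lemma St_subset_topspace: "open_cover X \<U> \<Longrightarrow> St A \<U> \<subseteq> topspace X"
  unfolding St_def open_cover_def by blast

lemma St_range_imp_St_singleton: "x \<in> St (range e) \<U> \<Longrightarrow> \<exists>k. x \<in> St {e k} \<U>"
  unfolding St_def by blast

lemma closed_discrete_finite:
  assumes "t1_space X" "finite F" "F \<subseteq> topspace X"
  shows "closed_discrete X F"
  unfolding closed_discrete_def
proof (intro conjI ballI)
  show "closedin X F" using assms t1_space_closedin_finite by blast
  fix x assume "x \<in> F"
  have "closedin X (F - {x})"
    using assms t1_space_closedin_finite by (metis Diff_subset finite_Diff subset_trans)
  then have "openin X (topspace X - (F - {x}))" by blast
  moreover have "(topspace X - (F - {x})) \<inter> F = {x}" using \<open>x \<in> F\<close> assms by blast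
  ultimately show "\<exists>U. openin X U \<and> U \<inter> F = {x}" by blast
qed

lemma card_less_b_imp_eventually_bounded:
  fixes h :: "'a \<Rightarrow> nat \<Rightarrow> nat"
  assumes "card_less_b S"
  shows "\<exists>g. \<forall>x\<in>S. \<forall>\<^sub>F n in sequentially. h x n \<le> g n"
proof (rule ccontr)
  assume "\<not> ?thesis"
  then have "unbounded_family (h ` S)" unfolding unbounded_family_def by blast
  then have "(card_of S, card_of (h ` S)) \<in> ordLess" using assms card_less_b_def by blast
  moreover have "(card_of (h ` S), card_of S) \<in> ordLeq" by (rule card_of_image)
  ultimately show False using not_ordLess_ordLeq by blast
qed

lemma selectively_strongly_star_Menger_imp_strongly_selectively_a:
  assumes "t1_space X" "selectively_strongly_star_Menger X"
  shows "strongly_selectively_a X"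
  unfolding strongly_selectively_a_def
proof (intro allI impI)
  fix \<U> :: "nat \<Rightarrow> 'a set set" and D :: "nat \<Rightarrow> 'a set"
  assume covers_dense: "(\<forall>n. open_cover X (\<U> n)) \<and> (\<forall>n. dense_in X (D n))"
  then obtain F where F: "\<forall>n. finite (F n) \<and> F n \<subseteq> D n" "(\<Union>n. St (F n) (\<U> n)) = topspace X"
    using assms(2)[unfolded selectively_strongly_star_Menger_def, rule_format, of \<U> D] by blast
  have "F n \<subseteq> topspace X" for n
    using F covers_dense unfolding dense_in_def by blast
  then have "\<forall>n. F n \<subseteq> D n \<and> closed_discrete X (F n)"
    using F closed_discrete_finite assms(1) by blast
  with F show "\<exists>C. (\<forall>n. C n \<subseteq> D n \<and> closed_discrete X (C n)) \<and>
                   (\<Union>n. St (C n) (\<U> n)) = topspace X" by blast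
qed

lemma strongly_selectively_a_frequently:
  assumes "strongly_selectively_a X"
    and "\<forall>n. open_cover X (\<U> n)" "\<forall>n. dense_in X (D n)"
  shows "\<exists>C. (\<forall>n. C n \<subseteq> D n \<and> closed_discrete X (C n)) \<and>
             (\<forall>x\<in>topspace X. \<exists>\<^sub>F n in sequentially. x \<in> St (C n) (\<U> n))"
proof -
  let ?\<U> = "\<lambda>m j. \<U> (prod_encode (m, j))" and ?D = "\<lambda>m j. D (prod_encode (m, j))"
  have "\<forall>m. \<exists>C. (\<forall>j. C j \<subseteq> ?D m j \<and> closed_discrete X (C j)) \<and>
                (\<Union>j. St (C j) (?\<U> m j)) = topspace X"
  proof
    fix m
    show "\<exists>C. (\<forall>j. C j \<subseteq> ?D m j \<and> closed_discrete X (C j)) \<and>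
             (\<Union>j. St (C j) (?\<U> m j)) = topspace X"
      using assms(1)[unfolded strongly_selectively_a_def, rule_format, of "?\<U> m" "?D m"] assms(2,3)
      by blast
  qed
  then obtain CC where CC: "\<forall>m. (\<forall>j. CC m j \<subseteq> ?D m j \<and> closed_discrete X (CC m j)) \<and>
                              (\<Union>j. St (CC m j) (?\<U> m j)) = topspace X"
    by (rule choice[THEN exE]) blast
  define C where "C n = CC (fst (prod_decode n)) (snd (prod_decode n))" for n
  have C_encode: "C (prod_encode (m, j)) = CC m j" for m j
    unfolding C_def by simp
  have "C n \<subseteq> D n \<and> closed_discrete X (C n)" for n
  proof -
    obtain m j where "n = prod_encode (m, j)" by (metis prod_decode_inverse surj_pair)
    then show ?thesis using CC by (simp add: C_encode)
  qed
  moreover have "\<exists>\<^sub>F n in sequentially. x \<in> St (C n) (\<U> n)" if "x \<in> topspace X" for x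
    unfolding frequently_sequentially
  proof
    fix N
    obtain j where "x \<in> St (CC N j) (?\<U> N j)" using CC \<open>x \<in> topspace X\<close> by blast
    then have "x \<in> St (C (prod_encode (N, j))) (\<U> (prod_encode (N, j)))"
      by (simp add: C_encode)
    then show "\<exists>n\<ge>N. x \<in> St (C n) (\<U> n)" using le_prod_encode_1 by blast
  qed
  ultimately show ?thesis by blast
qed

lemma card_less_b_finite_star_selection:
  assumes "card_less_b S" "\<And>n. countable (C n)"
    and "\<forall>x\<in>S. \<exists>\<^sub>F n in sequentially. x \<in> St (C n) (\<U> n)"
  shows "\<exists>F. (\<forall>n. finite (F n) \<and> F n \<subseteq> C n) \<and> S \<subseteq> (\<Union>n. St (F n) (\<U> n))"
proof -
  define e where "e n = from_nat_into (C n)" for n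
  define first_index where "first_index x n = (LEAST k. x \<in> St {e n k} (\<U> n))" for x n
  obtain g where g: "\<forall>x\<in>S. \<forall>\<^sub>F n in sequentially. first_index x n \<le> g n"
    using card_less_b_imp_eventually_bounded[OF assms(1)] by blast
  define F where "F n = (if C n = {} then {} else e n ` {..g n})" for n
  have "F n \<subseteq> C n" for n
    unfolding F_def e_def using assms(2) by (auto intro: from_nat_into)
  moreover have "x \<in> (\<Union>n. St (F n) (\<U> n))" if "x \<in> S" for x
  proof -
    obtain N where "\<forall>n\<ge>N. first_index x n \<le> g n"
      using g \<open>x \<in> S\<close> unfolding eventually_sequentially by blast
    moreover obtain n where "n \<ge> N" "x \<in> St (C n) (\<U> n)"
      using assms(3) \<open>x \<in> S\<close> unfolding frequently_sequentially by blast
    ultimately have n: "first_index x n \<le> g n" "x \<in> St (C n) (\<U> n)" by auto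
    then have nonempty: "C n \<noteq> {}" by (auto simp: St_def)
    then have "range (e n) = C n" unfolding e_def using assms(2) by simp
    then have "\<exists>k. x \<in> St {e n k} (\<U> n)" using n(2) St_range_imp_St_singleton[of x "e n" "\<U> n"] by simp
    then have "x \<in> St {e n (first_index x n)} (\<U> n)" unfolding first_index_def by (rule LeastI_ex)
    moreover have "e n (first_index x n) \<in> F n" using n nonempty unfolding F_def by auto
    ultimately show ?thesis using St_mono[of "{e n (first_index x n)}" "F n"] by blast
  qed
  moreover have "finite (F n)" for n
    unfolding F_def by simp
  ultimately show ?thesis by blast
qed

lemma strongly_selectively_a_imp_selectively_strongly_star_Menger:
  assumes "countable_extent X" "card_less_b (topspace X)" "strongly_selectively_a X"
  shows "selectively_strongly_star_Menger X"
  unfolding selectively_strongly_star_Menger_def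
proof (intro allI impI)
  fix \<U> :: "nat \<Rightarrow> 'a set set" and D :: "nat \<Rightarrow> 'a set"
  assume covers_dense: "(\<forall>n. open_cover X (\<U> n)) \<and> (\<forall>n. dense_in X (D n))"
  then obtain C where C: "\<forall>n. C n \<subseteq> D n \<and> closed_discrete X (C n)"
    "\<forall>x\<in>topspace X. \<exists>\<^sub>F n in sequentially. x \<in> St (C n) (\<U> n)"
    using strongly_selectively_a_frequently[OF assms(3), of \<U> D] by blast
  have countable_C: "countable (C n)" for n
    using C(1) assms(1) unfolding countable_extent_def by blast
  obtain F where F: "\<forall>n. finite (F n) \<and> F n \<subseteq> C n" "topspace X \<subseteq> (\<Union>n. St (F n) (\<U> n))"
    using card_less_b_finite_star_selection[OF assms(2) countable_C C(2)] by blast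
  moreover have "(\<Union>n. St (F n) (\<U> n)) \<subseteq> topspace X"
    using covers_dense St_subset_topspace by blast
  ultimately show "\<exists>F. (\<forall>n. finite (F n) \<and> F n \<subseteq> D n) \<and> (\<Union>n. St (F n) (\<U> n)) = topspace X"
    using C(1) by (intro exI[of _ F]) blast
qed

theorem mainTheorem17:
  fixes X :: "'a topology"
  assumes "regular_space X" and "t1_space X"
    and "countable_extent X" and "card_less_b (topspace X)"
  shows "selectively_strongly_star_Menger X \<longleftrightarrow> strongly_selectively_a X"
  using selectively_strongly_star_Menger_imp_strongly_selectively_a[OF assms(2)]
    strongly_selectively_a_imp_selectively_strongly_star_Menger[OF assms(3,4)]
  by blast

end
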